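(* Let $0\to(M,\alpha_M)\xrightarrow{t}(G,\alpha_G)\xrightarrow{p}(Q,\mathrm{Id}_Q)\to0$ be a split short exact sequence of $\alpha$-perfect Hom-Leibniz algebras with splitting homomorphism $s:(Q,\mathrm{Id}_Q)\to(G,\alpha_G)$, $p\circ s=\mathrm{Id}_Q$. Let $\tau=\mathfrak{uce}_\alpha(t)$, $\pi=\mathfrak{uce}_\alpha(p):\mathfrak{uce}_\alpha(G)\to\mathfrak{uce}(Q)$. Then $\mathrm{Ker}(\pi)$ equals the subspace $\{\alpha_M(M),\alpha_M(M)\}$ of $\mathfrak{uce}_\alpha(G)$ spanned by the classes $\{t(\alpha_M(m_1)),t(\alpha_M(m_2))\}$, $m_1,m_2\in M$, and this subspace equals $\tau(\mathfrak{uce}_\alpha(M))$.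
   Context: Hom-Leibniz algebras are multiplicative: $(L,\alpha_L)$ is a $\mathbb{K}$-vector space with bilinear bracket and linear $\alpha_L$ such that $[\alpha_L(x),[y,z]]=[[x,y],\alpha_L(z)]-[[x,z],\alpha_L(y)]$ and $\alpha_L[x,y]=[\alpha_L(x),\alpha_L(y)]$; homomorphisms preserve brackets and commute with structure maps. $(L,\alpha_L)$ is $\alpha$-perfect if $L=[\alpha_L(L),\alpha_L(L)]$ (so $(Q,\mathrm{Id}_Q)$ is $\alpha$-perfect iff $Q=[Q,Q]$). For $\alpha$-perfect $(L,\alpha_L)$: $I_L\subseteq\alpha_L(L)\otimes\alpha_L(L)$ is spanned by $-[x_1,x_2]\otimes\alpha_L(x_3)+[x_1,x_3]\otimes\alpha_L(x_2)+\alpha_L(x_1)\otimes[x_2,x_3]$; $\mathfrak{uce}_\alpha(L)=(\alpha_L(L)\otimes\alpha_L(L))/I_L$ with classes $\{\alpha_L(x_1),\alpha_L(x_2)\}$, bracket $[\{a,b\},\{c,e\}]=\{[a,b],[c,e]\}$, endomorphism $\overline{\alpha}\{\alpha_L(x_1),\alpha_L(x_2)\}=\{\alpha_L^2(x_1),\alpha_L^2(x_2)\}$. For $\alpha_L=\mathrm{Id}$ this is $\mathfrak{uce}(Q)=(Q\otimes Q)/I_Q$ with identity endomorphism. For a homomorphism $g$ of $\alpha$-perfect algebras, $\mathfrak{uce}_\alpha(g)\{\alpha(x_1),\alpha(x_2)\}=\{\alpha(g(x_1)),\alpha(g(x_2))\}$. *)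

theory Defs
  imports Main "HOL.Vector_Spaces" "HOL-Library.Function_Algebras"
begin

definition hom_leibniz ::
  "('k::field \<Rightarrow> 'v::ab_group_add \<Rightarrow> 'v) \<Rightarrow> ('v \<Rightarrow> 'v \<Rightarrow> 'v) \<Rightarrow> ('v \<Rightarrow> 'v) \<Rightarrow> bool" where
  "hom_leibniz sc br al \<longleftrightarrow>
     vector_space sc \<and>
     (\<forall>x. Vector_Spaces.linear sc sc (br x)) \<and>
     (\<forall>y. Vector_Spaces.linear sc sc (\<lambda>x. br x y)) \<and>
     Vector_Spaces.linear sc sc al \<and>
     (\<forall>x y z. br (al x) (br y z) = br (br x y) (al z) - br (br x z) (al y)) \<and>
     (\<forall>x y. al (br x y) = br (al x) (al y))"

definition hl_hom ::
  "('k::field \<Rightarrow> 'v::ab_group_add \<Rightarrow> 'v) \<Rightarrow> ('v \<Rightarrow> 'v \<Rightarrow> 'v) \<Rightarrow> ('v \<Rightarrow> 'v) \<Rightarrow>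
   ('k \<Rightarrow> 'w::ab_group_add \<Rightarrow> 'w) \<Rightarrow> ('w \<Rightarrow> 'w \<Rightarrow> 'w) \<Rightarrow> ('w \<Rightarrow> 'w) \<Rightarrow> ('v \<Rightarrow> 'w) \<Rightarrow> bool" where
  "hl_hom sc1 br1 al1 sc2 br2 al2 f \<longleftrightarrow>
     Vector_Spaces.linear sc1 sc2 f \<and>
     (\<forall>x y. f (br1 x y) = br2 (f x) (f y)) \<and>
     (\<forall>x. f (al1 x) = al2 (f x))"

definition alpha_perfect ::
  "('k::field \<Rightarrow> 'v::ab_group_add \<Rightarrow> 'v) \<Rightarrow> ('v \<Rightarrow> 'v \<Rightarrow> 'v) \<Rightarrow> ('v \<Rightarrow> 'v) \<Rightarrow> bool" where
  "alpha_perfect sc br al \<longleftrightarrow> module.span sc {br (al x) (al y) | x y. True} = UNIV"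

text \<open>Free K-vector space on pairs: finitely supported functions 'v \<times> 'v \<Rightarrow> 'k,
  with pointwise operations. The tensor product al(L) \<otimes> al(L) is the span of the
  basis vectors delta a b (a, b in al(L)) modulo the bilinearity relations.\<close>

definition fsmult :: "'k::field \<Rightarrow> ('a \<Rightarrow> 'k) \<Rightarrow> ('a \<Rightarrow> 'k)" where
  "fsmult c f = (\<lambda>z. c * f z)"

definition delta :: "'v \<Rightarrow> 'v \<Rightarrow> ('v \<times> 'v \<Rightarrow> 'k::field)" where
  "delta a b = (\<lambda>z. if z = (a, b) then 1 else 0)"

definition free_sp :: "('v \<Rightarrow> 'v) \<Rightarrow> ('v \<times> 'v \<Rightarrow> 'k::field) set" where
  "free_sp al = module.span fsmult {delta (al x) (al y) | x y. True}"

definition bilin_rels ::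
  "('k::field \<Rightarrow> 'v::ab_group_add \<Rightarrow> 'v) \<Rightarrow> ('v \<Rightarrow> 'v) \<Rightarrow> ('v \<times> 'v \<Rightarrow> 'k) set" where
  "bilin_rels sc al =
     {delta (a + a') b - delta a b - delta a' b | a a' b. a \<in> range al \<and> a' \<in> range al \<and> b \<in> range al}
   \<union> {delta a (b + b') - delta a b - delta a b' | a b b'. a \<in> range al \<and> b \<in> range al \<and> b' \<in> range al}
   \<union> {delta (sc c a) b - fsmult c (delta a b) | c a b. a \<in> range al \<and> b \<in> range al}
   \<union> {delta a (sc c b) - fsmult c (delta a b) | c a b. a \<in> range al \<and> b \<in> range al}"

definition IL_gens ::
  "('v::ab_group_add \<Rightarrow> 'v \<Rightarrow> 'v) \<Rightarrow> ('v \<Rightarrow> 'v) \<Rightarrow> ('v \<times> 'v \<Rightarrow> 'k::field) set" where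
  "IL_gens br al =
     {- delta (br x1 x2) (al x3) + delta (br x1 x3) (al x2) + delta (al x1) (br x2 x3) | x1 x2 x3. True}"

text \<open>Kernel of the projection free space \<rightarrow> (al(L) \<otimes> al(L)) / I_L.\<close>
definition uce_rels ::
  "('k::field \<Rightarrow> 'v::ab_group_add \<Rightarrow> 'v) \<Rightarrow> ('v \<Rightarrow> 'v \<Rightarrow> 'v) \<Rightarrow> ('v \<Rightarrow> 'v) \<Rightarrow> ('v \<times> 'v \<Rightarrow> 'k) set" where
  "uce_rels sc br al = module.span fsmult (bilin_rels sc al \<union> IL_gens br al)"

definition uce_class ::
  "('k::field \<Rightarrow> 'v::ab_group_add \<Rightarrow> 'v) \<Rightarrow> ('v \<Rightarrow> 'v \<Rightarrow> 'v) \<Rightarrow> ('v \<Rightarrow> 'v) \<Rightarrow> ('v \<times> 'v \<Rightarrow> 'k)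
     \<Rightarrow> ('v \<times> 'v \<Rightarrow> 'k) set" where
  "uce_class sc br al f = {g. g - f \<in> uce_rels sc br al}"

text \<open>The carrier of uce_alpha(L): the set of classes; its zero is uce_class sc br al 0.\<close>
definition uce ::
  "('k::field \<Rightarrow> 'v::ab_group_add \<Rightarrow> 'v) \<Rightarrow> ('v \<Rightarrow> 'v \<Rightarrow> 'v) \<Rightarrow> ('v \<Rightarrow> 'v) \<Rightarrow> ('v \<times> 'v \<Rightarrow> 'k) set set" where
  "uce sc br al = uce_class sc br al ` free_sp al"

text \<open>Push-forward of free-space elements along g on both tensor factors:
  delta a b \<mapsto> delta (g a) (g b), extended linearly.\<close>
definition push :: "('v \<Rightarrow> 'w) \<Rightarrow> ('v \<times> 'v \<Rightarrow> 'k::field) \<Rightarrow> ('w \<times> 'w \<Rightarrow> 'k)" where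
  "push g f = (\<lambda>(a, b). \<Sum>z\<in>{z. f z \<noteq> 0 \<and> g (fst z) = a \<and> g (snd z) = b}. f z)"

text \<open>uce_alpha(g): {al x1, al x2} \<mapsto> {al (g x1), al (g x2)} = {g (al x1), g (al x2)},
  defined on a class via any representative.\<close>
definition uce_map ::
  "('k::field \<Rightarrow> 'w::ab_group_add \<Rightarrow> 'w) \<Rightarrow> ('w \<Rightarrow> 'w \<Rightarrow> 'w) \<Rightarrow> ('w \<Rightarrow> 'w) \<Rightarrow> ('v \<Rightarrow> 'w)
     \<Rightarrow> ('v \<times> 'v \<Rightarrow> 'k) set \<Rightarrow> ('w \<times> 'w \<Rightarrow> 'k) set" where
  "uce_map sc2 br2 al2 g c = uce_class sc2 br2 al2 (push g (SOME f. f \<in> c))"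

end

theory Submission
  imports Defs
begin

text \<open>
  Work in the free space on pairs and let \<open>T\<close> be the span of the relations of
  \<open>uce\<^sub>\<alpha>(G)\<close> together with the tensors \<open>{t(\<alpha>m\<^sub>1), t(\<alpha>m\<^sub>2)}\<close>. Using the
  splitting, write \<open>a = u + s(p a)\<close> with \<open>p u = 0\<close>; then modulo bilinearity
  \<open>{a, b} - {s(p a), s(p b)}\<close> is a sum of the mixed terms \<open>{u, v}\<close>, \<open>{u, s q}\<close>,
  \<open>{s q, v}\<close>. The first lies in \<open>T\<close> by exactness; for the other two, \<open>\<alpha>\<close>-perfectness
  of \<open>M\<close> reduces to \<open>u = [t(\<alpha>m\<^sub>1), t(\<alpha>m\<^sub>2)]\<close>, and the Hom-Leibniz relation of
  \<open>I\<^sub>G\<close> rewrites \<open>{u, s q}\<close> and \<open>{s q, u}\<close> through terms whose both entries lie in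
  \<open>ker p\<close>. Hence every \<open>f\<close> is congruent modulo \<open>T\<close> to \<open>s\<^sub>*(p\<^sub>*f)\<close>, which is a relation
  when \<open>f\<close> is in the kernel of \<open>\<pi>\<close>. The description as \<open>\<tau>(uce\<^sub>\<alpha>(M))\<close> is just
  that \<open>t\<^sub>*\<close> maps the generators of the free space of \<open>M\<close> onto those tensors.
\<close>

section \<open>Finitely supported functions and push-forward\<close>

interpretation FS: module "fsmult :: 'k::field \<Rightarrow> ('a \<Rightarrow> 'k) \<Rightarrow> ('a \<Rightarrow> 'k)"
  by unfold_locales (auto simp: fsmult_def fun_eq_iff algebra_simps)

definition finite_support :: "('a \<Rightarrow> 'k::field) \<Rightarrow> bool" where
  "finite_support f \<longleftrightarrow> finite {z. f z \<noteq> 0}"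

lemma finite_support_delta [simp]: "finite_support (delta a b)"
  unfolding finite_support_def delta_def by (rule finite_subset[of _ "{(a, b)}"]) auto

lemma finite_support_zero [simp]: "finite_support 0"
  by (simp add: finite_support_def)

lemma finite_support_add [simp]:
  "finite_support f \<Longrightarrow> finite_support h \<Longrightarrow> finite_support (f + h)"
  unfolding finite_support_def
  by (auto intro: finite_subset[of _ "{z. f z \<noteq> 0} \<union> {z. h z \<noteq> 0}"])

lemma finite_support_fsmult [simp]: "finite_support f \<Longrightarrow> finite_support (fsmult c f)"
  unfolding finite_support_def fsmult_def by (auto intro: finite_subset[of _ "{z. f z \<noteq> 0}"])

lemma finite_support_uminus [simp]: "finite_support f \<Longrightarrow> finite_support (- f)"
  by (simp add: finite_support_def)

lemma finite_support_diff [simp]: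
  "finite_support f \<Longrightarrow> finite_support h \<Longrightarrow> finite_support (f - h)"
  by (metis diff_conv_add_uminus finite_support_add finite_support_uminus)

lemma subspace_finite_support: "FS.subspace {f. finite_support f}"
  by (rule FS.subspaceI) (auto intro: finite_support_add finite_support_fsmult)

lemma span_finite_support:
  "X \<subseteq> {f. finite_support f} \<Longrightarrow> FS.span X \<subseteq> {f. finite_support f}"
  by (rule FS.span_minimal[OF _ subspace_finite_support])

definition linear_on_fs :: "(('a \<Rightarrow> 'k::field) \<Rightarrow> ('b \<Rightarrow> 'k)) \<Rightarrow> bool" where
  "linear_on_fs F \<longleftrightarrow>
     (\<forall>f h. finite_support f \<longrightarrow> finite_support h \<longrightarrow> F (f + h) = F f + F h) \<and>
     (\<forall>c f. finite_support f \<longrightarrow> F (fsmult c f) = fsmult c (F f))"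

lemma linear_on_fs_zero:
  fixes F :: "('a \<Rightarrow> 'k::field) \<Rightarrow> ('b \<Rightarrow> 'k)"
  assumes "linear_on_fs F" shows "F 0 = 0"
proof -
  have "F (fsmult 0 0) = fsmult 0 (F 0)"
    using assms finite_support_zero unfolding linear_on_fs_def by blast
  then show ?thesis by simp
qed

lemma linear_on_fs_image_span:
  assumes F: "linear_on_fs F" and X: "X \<subseteq> {f. finite_support f}"
  shows "F ` FS.span X = FS.span (F ` X)"
proof -
  have add: "F (f + h) = F f + F h" if "finite_support f" "finite_support h" for f h
    using F that unfolding linear_on_fs_def by blast
  have scale: "F (fsmult c f) = fsmult c (F f)" if "finite_support f" for c f
    using F that unfolding linear_on_fs_def by blast
  have "finite_support f \<and> F f \<in> FS.span (F ` X)" if "f \<in> FS.span X" for f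
    using that
  proof (induction rule: FS.span_induct)
    case step
    then show ?case using X by (auto intro: FS.span_base)
  next
    case base
    show ?case
    proof (rule FS.subspaceI)
      show "0 \<in> {f. finite_support f \<and> F f \<in> FS.span (F ` X)}"
        by (simp add: linear_on_fs_zero[OF F] FS.span_zero)
      show "f + h \<in> {f. finite_support f \<and> F f \<in> FS.span (F ` X)}"
        if "f \<in> {f. finite_support f \<and> F f \<in> FS.span (F ` X)}"
          "h \<in> {f. finite_support f \<and> F f \<in> FS.span (F ` X)}" for f h
        using that by (simp add: add FS.span_add)
      show "fsmult c f \<in> {f. finite_support f \<and> F f \<in> FS.span (F ` X)}"
        if "f \<in> {f. finite_support f \<and> F f \<in> FS.span (F ` X)}" for c f
        using that by (simp add: scale FS.span_scale)
    qed
  qed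
  then have sub: "F ` FS.span X \<subseteq> FS.span (F ` X)" by blast
  have fs: "finite_support f" if "f \<in> FS.span X" for f
    using span_finite_support[OF X] that by blast
  have "FS.subspace (F ` FS.span X)"
  proof (rule FS.subspaceI)
    show "0 \<in> F ` FS.span X"
      using linear_on_fs_zero[OF F] FS.span_zero by (metis image_eqI)
    show "f + h \<in> F ` FS.span X" if fh: "f \<in> F ` FS.span X" "h \<in> F ` FS.span X" for f h
    proof -
      obtain a b where "a \<in> FS.span X" "b \<in> FS.span X" "f = F a" "h = F b"
        using fh by blast
      then show ?thesis
        using add[OF fs fs] FS.span_add by (metis image_eqI)
    qed
    show "fsmult c f \<in> F ` FS.span X" if f: "f \<in> F ` FS.span X" for c f
    proof -
      obtain a where "a \<in> FS.span X" "f = F a"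
        using f by blast
      then show ?thesis
        using scale[OF fs] FS.span_scale by (metis image_eqI)
    qed
  qed
  then have "FS.span (F ` X) \<subseteq> F ` FS.span X"
    by (intro FS.span_minimal) (auto intro: FS.span_base)
  with sub show ?thesis by blast
qed

lemma push_eq_sum:
  assumes "finite D" "{z. f z \<noteq> 0} \<subseteq> D"
  shows "push g f (a, b) = (\<Sum>z\<in>{z\<in>D. g (fst z) = a \<and> g (snd z) = b}. f z)"
  unfolding push_def split_conv by (rule sum.mono_neutral_left) (use assms in auto)

lemma linear_on_fs_push: "linear_on_fs (push g)"
  unfolding linear_on_fs_def
proof safe
  fix f h :: "'a \<times> 'a \<Rightarrow> 'k::field"
  assume "finite_support f" "finite_support h"
  then have D: "finite ({z. f z \<noteq> 0} \<union> {z. h z \<noteq> 0})"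
    unfolding finite_support_def by simp
  have "push g (f + h) (a, b) = push g f (a, b) + push g h (a, b)" for a b
    by (subst (1 2 3) push_eq_sum[OF D]) (auto simp: sum.distrib)
  then show "push g (f + h) = push g f + push g h" by (auto simp: fun_eq_iff)
next
  fix c and f :: "'a \<times> 'a \<Rightarrow> 'k::field"
  assume "finite_support f"
  then have D: "finite {z. f z \<noteq> 0}"
    unfolding finite_support_def by simp
  have "push g (fsmult c f) (a, b) = c * push g f (a, b)" for a b
    by (subst (1 2) push_eq_sum[OF D]) (auto simp: fsmult_def sum_distrib_left)
  then show "push g (fsmult c f) = fsmult c (push g f)" by (auto simp: fun_eq_iff fsmult_def)
qed

lemma finite_support_push:
  assumes "finite_support f" shows "finite_support (push g f)"
proof -
  have "(a, b) \<in> map_prod g g ` {z. f z \<noteq> 0}" if "push g f (a, b) \<noteq> 0" for a b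
  proof -
    have "{z. f z \<noteq> 0 \<and> g (fst z) = a \<and> g (snd z) = b} \<noteq> {}"
    proof
      assume "{z. f z \<noteq> 0 \<and> g (fst z) = a \<and> g (snd z) = b} = {}"
      then have "push g f (a, b) = 0" by (simp only: push_def split_conv sum.empty)
      then show False using that by simp
    qed
    then show ?thesis by force
  qed
  then have "{w. push g f w \<noteq> 0} \<subseteq> map_prod g g ` {z. f z \<noteq> 0}" by auto
  then show ?thesis
    using assms unfolding finite_support_def by (auto intro: finite_subset)
qed

lemma push_delta [simp]: "push g (delta a b) = delta (g a) (g b)"
proof (rule ext, clarify)
  fix x y
  have "push g (delta a b) (x, y) = (\<Sum>z\<in>{z\<in>{(a, b)}. g (fst z) = x \<and> g (snd z) = y}. delta a b z)"
    by (rule push_eq_sum) (auto simp: delta_def)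
  also have "{z\<in>{(a, b)}. g (fst z) = x \<and> g (snd z) = y}
             = (if g a = x \<and> g b = y then {(a, b)} else {})"
    by auto
  finally show "push g (delta a b) (x, y) = delta (g a) (g b) (x, y)"
    by (auto simp: delta_def split: if_splits)
qed

lemma push_add [simp]:
  "finite_support f \<Longrightarrow> finite_support h \<Longrightarrow> push g (f + h) = push g f + push g h"
  using linear_on_fs_push unfolding linear_on_fs_def by blast

lemma push_fsmult [simp]: "finite_support f \<Longrightarrow> push g (fsmult c f) = fsmult c (push g f)"
  using linear_on_fs_push unfolding linear_on_fs_def by blast

lemma uminus_eq_fsmult: "- f = fsmult (- 1) f"
  by (simp add: fsmult_def fun_eq_iff)

lemma push_uminus [simp]: "finite_support f \<Longrightarrow> push g (- f) = - push g f"
  by (metis push_fsmult uminus_eq_fsmult)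

lemma push_diff [simp]:
  "finite_support f \<Longrightarrow> finite_support h \<Longrightarrow> push g (f - h) = push g f - push g h"
  by (metis diff_conv_add_uminus finite_support_uminus push_add push_uminus)

lemma hl_hom_module_hom: "hl_hom sc1 br1 al1 sc2 br2 al2 g \<Longrightarrow> module_hom sc1 sc2 g"
  by (simp add: hl_hom_def linear_iff_module_hom)

lemma push_uce_generators:
  assumes g: "hl_hom sc1 br1 al1 sc2 br2 al2 g"
  shows "push g ` (bilin_rels sc1 al1 \<union> IL_gens br1 al1) \<subseteq> bilin_rels sc2 al2 \<union> IL_gens br2 al2"
proof -
  have rng: "g a \<in> range al2" if "a \<in> range al1" for a
    using that g by (auto simp: hl_hom_def)
  have add: "g (a + b) = g a + g b" and scale: "g (sc1 c a) = sc2 c (g a)" for a b c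
    using g by (simp_all add: hl_hom_def linear_iff)
  have br: "g (br1 a b) = br2 (g a) (g b)" and al: "g (al1 a) = al2 (g a)" for a b
    using g by (simp_all add: hl_hom_def)
  have "push g ` bilin_rels sc1 al1 \<subseteq> bilin_rels sc2 al2"
    unfolding bilin_rels_def image_Un
    by (intro Un_mono; clarsimp simp: add scale; blast intro: rng)
  moreover have "push g ` IL_gens br1 al1 \<subseteq> IL_gens br2 al2"
    unfolding IL_gens_def by (clarsimp simp: br al; blast)
  ultimately show ?thesis by blast
qed

section \<open>Relations of the universal central extension\<close>

lemma uce_generators_finite_support:
  "bilin_rels sc al \<union> IL_gens br al \<subseteq> {f. finite_support f}"
  unfolding bilin_rels_def IL_gens_def by auto

lemma subspace_uce_rels: "FS.subspace (uce_rels sc br al)"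
  unfolding uce_rels_def by (rule FS.subspace_span)

lemma uce_rels_finite_support: "r \<in> uce_rels sc br al \<Longrightarrow> finite_support r"
  using span_finite_support[OF uce_generators_finite_support] unfolding uce_rels_def by blast

lemma push_uce_rels:
  assumes "hl_hom sc1 br1 al1 sc2 br2 al2 g"
  shows "push g ` uce_rels sc1 br1 al1 \<subseteq> uce_rels sc2 br2 al2"
  unfolding uce_rels_def
  using linear_on_fs_image_span[OF linear_on_fs_push[of g] uce_generators_finite_support[of sc1 al1 br1]]
    FS.span_mono[OF push_uce_generators[OF assms]] by simp

lemma uce_class_self: "f \<in> uce_class sc br al f"
  using FS.subspace_0[OF subspace_uce_rels] by (simp add: uce_class_def)

lemma uce_class_eq_iff:
  "uce_class sc br al f = uce_class sc br al h \<longleftrightarrow> f - h \<in> uce_rels sc br al"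
proof
  assume "uce_class sc br al f = uce_class sc br al h"
  then have "f \<in> uce_class sc br al h" using uce_class_self by metis
  then show "f - h \<in> uce_rels sc br al" by (simp add: uce_class_def)
next
  assume fh: "f - h \<in> uce_rels sc br al"
  have "k - f \<in> uce_rels sc br al \<longleftrightarrow> k - h \<in> uce_rels sc br al" for k
  proof
    assume "k - f \<in> uce_rels sc br al"
    from FS.subspace_add[OF subspace_uce_rels this fh] show "k - h \<in> uce_rels sc br al" by simp
  next
    assume "k - h \<in> uce_rels sc br al"
    from FS.subspace_diff[OF subspace_uce_rels this fh] show "k - f \<in> uce_rels sc br al" by simp
  qed
  then show "uce_class sc br al f = uce_class sc br al h"
    by (simp add: uce_class_def)
qed

lemma uce_map_uce_class:
  assumes g: "hl_hom sc1 br1 al1 sc2 br2 al2 g" and f: "finite_support f"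
  shows "uce_map sc2 br2 al2 g (uce_class sc1 br1 al1 f) = uce_class sc2 br2 al2 (push g f)"
proof -
  define f' where "f' = (SOME f'. f' \<in> uce_class sc1 br1 al1 f)"
  have "f' \<in> uce_class sc1 br1 al1 f"
    unfolding f'_def by (rule someI[of _ f]) (rule uce_class_self)
  then have r: "f' - f \<in> uce_rels sc1 br1 al1" by (simp add: uce_class_def)
  then have "finite_support f'"
    using finite_support_add[OF uce_rels_finite_support[OF r] f] by simp
  then have "push g f' - push g f = push g (f' - f)" using f by simp
  also have "\<dots> \<in> uce_rels sc2 br2 al2" using push_uce_rels[OF g] r by blast
  finally show ?thesis
    unfolding uce_map_def f'_def[symmetric] by (simp add: uce_class_eq_iff)
qed

lemma hom_leibniz_module: "hom_leibniz sc br al \<Longrightarrow> module sc"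
  unfolding hom_leibniz_def module_iff_vector_space by blast

lemma alpha_perfect_subspace_eq_UNIV:
  assumes "alpha_perfect sc br al" "module sc" "module.subspace sc S"
    and "\<And>x y. br (al x) (al y) \<in> S"
  shows "S = UNIV"
proof -
  have "module.span sc {br (al x) (al y) | x y. True} \<subseteq> S"
    by (rule module.span_minimal[OF assms(2) _ assms(3)]) (use assms(4) in auto)
  then show ?thesis using assms(1) unfolding alpha_perfect_def by blast
qed

lemma alpha_perfect_surj:
  assumes hl: "hom_leibniz sc br al" and perfect: "alpha_perfect sc br al"
  shows "surj al"
proof (rule alpha_perfect_subspace_eq_UNIV[OF perfect hom_leibniz_module[OF hl]])
  have "module_hom sc sc al"
    using hl by (simp add: hom_leibniz_def linear_iff_module_hom)
  then show "module.subspace sc (range al)"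
    using module_hom.subspace_image module.subspace_UNIV hom_leibniz_module[OF hl] by blast
  show "br (al x) (al y) \<in> range al" for x y
    using hl unfolding hom_leibniz_def by (metis rangeI)
qed

lemma bilin_rels_memI:
  assumes "surj al"
  shows "delta (a + a') b - delta a b - delta a' b \<in> bilin_rels sc al"
    and "delta a (b + b') - delta a b - delta a b' \<in> bilin_rels sc al"
    and "delta (sc c a) b - fsmult c (delta a b) \<in> bilin_rels sc al"
    and "delta a (sc c b) - fsmult c (delta a b) \<in> bilin_rels sc al"
  unfolding bilin_rels_def
  by ((intro UnI1; force simp: assms) | (rule UnI1, rule UnI1, rule UnI2; force simp: assms)
      | (rule UnI1, rule UnI2; force simp: assms) | (rule UnI2; force simp: assms))+

lemma free_sp_finite_support: "f \<in> free_sp al \<Longrightarrow> finite_support f"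
proof -
  have "{delta (al x) (al y) | x y. True} \<subseteq> {f. finite_support f}" by auto
  from span_finite_support[OF this] show "f \<in> free_sp al \<Longrightarrow> finite_support f"
    unfolding free_sp_def by blast
qed

lemma delta_zero_left_uce_rels:
  assumes "surj al"
  shows "delta 0 b \<in> uce_rels sc br al"
proof -
  have "delta (0 + 0) b - delta 0 b - delta 0 b \<in> uce_rels sc br al"
    using bilin_rels_memI(1)[OF assms] FS.span_base unfolding uce_rels_def by blast
  from FS.subspace_neg[OF subspace_uce_rels this] show ?thesis by simp
qed

lemma subspace_delta_left:
  assumes M: "module sc" and al: "surj al" and T: "FS.subspace T" and rels: "bilin_rels sc al \<subseteq> T"
  shows "module.subspace sc {u. delta u w \<in> T}"
proof (rule module.subspaceI[OF M])
  have "- (delta (0 + 0) w - delta 0 w - delta 0 w) \<in> T"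
    using FS.subspace_neg[OF T] rels bilin_rels_memI(1)[OF al] by blast
  then show "0 \<in> {u. delta u w \<in> T}" by simp
next
  fix x y assume "x \<in> {u. delta u w \<in> T}" "y \<in> {u. delta u w \<in> T}"
  moreover have "delta (x + y) w - delta x w - delta y w \<in> T"
    using rels bilin_rels_memI(1)[OF al] by blast
  ultimately have "(delta (x + y) w - delta x w - delta y w) + delta x w + delta y w \<in> T"
    by (intro FS.subspace_add[OF T]) simp_all
  then show "x + y \<in> {u. delta u w \<in> T}" by simp
next
  fix c x assume "x \<in> {u. delta u w \<in> T}"
  moreover have "delta (sc c x) w - fsmult c (delta x w) \<in> T"
    using rels bilin_rels_memI(3)[OF al] by blast
  ultimately have "(delta (sc c x) w - fsmult c (delta x w)) + fsmult c (delta x w) \<in> T"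
    by (intro FS.subspace_add[OF T] FS.subspace_scale[OF T]) simp_all
  then show "sc c x \<in> {u. delta u w \<in> T}" by simp
qed

lemma subspace_delta_right:
  assumes M: "module sc" and al: "surj al" and T: "FS.subspace T" and rels: "bilin_rels sc al \<subseteq> T"
  shows "module.subspace sc {u. delta w u \<in> T}"
proof (rule module.subspaceI[OF M])
  have "- (delta w (0 + 0) - delta w 0 - delta w 0) \<in> T"
    using FS.subspace_neg[OF T] rels bilin_rels_memI(2)[OF al] by blast
  then show "0 \<in> {u. delta w u \<in> T}" by simp
next
  fix x y assume "x \<in> {u. delta w u \<in> T}" "y \<in> {u. delta w u \<in> T}"
  moreover have "delta w (x + y) - delta w x - delta w y \<in> T"
    using rels bilin_rels_memI(2)[OF al] by blast
  ultimately have "(delta w (x + y) - delta w x - delta w y) + delta w x + delta w y \<in> T"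
    by (intro FS.subspace_add[OF T]) simp_all
  then show "x + y \<in> {u. delta w u \<in> T}" by simp
next
  fix c x assume "x \<in> {u. delta w u \<in> T}"
  moreover have "delta w (sc c x) - fsmult c (delta w x) \<in> T"
    using rels bilin_rels_memI(4)[OF al] by blast
  ultimately have "(delta w (sc c x) - fsmult c (delta w x)) + fsmult c (delta w x) \<in> T"
    by (intro FS.subspace_add[OF T] FS.subspace_scale[OF T]) simp_all
  then show "sc c x \<in> {u. delta w u \<in> T}" by simp
qed

section \<open>Split extensions\<close>

locale split_hom_leibniz_extension =
  fixes scM :: "'k::field \<Rightarrow> 'm::ab_group_add \<Rightarrow> 'm" and brM :: "'m \<Rightarrow> 'm \<Rightarrow> 'm" and alM :: "'m \<Rightarrow> 'm"
    and scG :: "'k \<Rightarrow> 'g::ab_group_add \<Rightarrow> 'g" and brG :: "'g \<Rightarrow> 'g \<Rightarrow> 'g" and alG :: "'g \<Rightarrow> 'g"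
    and scQ :: "'k \<Rightarrow> 'q::ab_group_add \<Rightarrow> 'q" and brQ :: "'q \<Rightarrow> 'q \<Rightarrow> 'q"
    and t :: "'m \<Rightarrow> 'g" and p :: "'g \<Rightarrow> 'q" and s :: "'q \<Rightarrow> 'g"
  assumes hlM: "hom_leibniz scM brM alM"
    and hlG: "hom_leibniz scG brG alG"
    and hlQ: "hom_leibniz scQ brQ id"
    and perfM: "alpha_perfect scM brM alM"
    and perfG: "alpha_perfect scG brG alG"
    and t_hom: "hl_hom scM brM alM scG brG alG t"
    and p_hom: "hl_hom scG brG alG scQ brQ id p"
    and exact: "range t = {g. p g = 0}"
    and s_hom: "hl_hom scQ brQ id scG brG alG s"
    and split: "\<And>q. p (s q) = q"
begin

definition M_gens :: "('g \<times> 'g \<Rightarrow> 'k) set" where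
  "M_gens = {delta (t (alM m1)) (t (alM m2)) | m1 m2. True}"

definition M_span :: "('g \<times> 'g \<Rightarrow> 'k) set" where
  "M_span = FS.span M_gens"

definition rels_mod_M :: "('g \<times> 'g \<Rightarrow> 'k) set" where
  "rels_mod_M = FS.span (M_gens \<union> (bilin_rels scG alG \<union> IL_gens brG alG))"

lemma rels_mod_M_eq: "rels_mod_M = {x + y | x y. x \<in> M_span \<and> y \<in> uce_rels scG brG alG}"
  unfolding rels_mod_M_def M_span_def uce_rels_def by (rule FS.span_Un)

lemma subspace_rels_mod_M: "FS.subspace rels_mod_M"
  unfolding rels_mod_M_def by (rule FS.subspace_span)

lemma M_gens_subset: "M_gens \<subseteq> rels_mod_M"
  and bilin_rels_subset: "bilin_rels scG alG \<subseteq> rels_mod_M"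
  and IL_gens_subset: "IL_gens brG alG \<subseteq> rels_mod_M"
  using FS.span_superset[of "M_gens \<union> (bilin_rels scG alG \<union> IL_gens brG alG)"]
  unfolding rels_mod_M_def by blast+

lemma uce_rels_subset: "uce_rels scG brG alG \<subseteq> rels_mod_M"
  unfolding rels_mod_M_def uce_rels_def by (rule FS.span_mono) blast

lemma surj_alM: "surj alM" and surj_alG: "surj alG"
  using alpha_perfect_surj hlM perfM hlG perfG by blast+

lemma p_t [simp]: "p (t m) = 0"
  using exact by auto

lemma p_alG [simp]: "p (alG x) = p x"
  using p_hom by (simp add: hl_hom_def)

lemma alG_s [simp]: "alG (s q) = s q"
  using s_hom by (simp add: hl_hom_def)

lemma p_brG_left [simp]: "p u = 0 \<Longrightarrow> p (brG u v) = 0"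
  and p_brG_right [simp]: "p v = 0 \<Longrightarrow> p (brG u v) = 0"
proof -
  have "module_hom scQ scQ (brQ y)" "module_hom scQ scQ (\<lambda>x. brQ x y)" for y
    using hlQ by (simp_all add: hom_leibniz_def linear_iff_module_hom)
  then have "brQ 0 y = 0" "brQ y 0 = 0" for y
    using module_hom.zero by fastforce+
  then show "p u = 0 \<Longrightarrow> p (brG u v) = 0" "p v = 0 \<Longrightarrow> p (brG u v) = 0"
    using p_hom by (simp_all add: hl_hom_def)
qed

lemma delta_ker_ker:
  assumes "p u = 0" "p v = 0"
  shows "delta u v \<in> rels_mod_M"
proof -
  obtain m n where "u = t m" "v = t n"
    using assms exact by blast
  moreover obtain m' n' where "m = alM m'" "n = alM n'"
    using surj_alM by (metis surjD)
  ultimately show ?thesis using M_gens_subset unfolding M_gens_def by blast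
qed

lemma IL_gens_mem:
  "- delta (brG x1 x2) (alG x3) + delta (brG x1 x3) (alG x2) + delta (alG x1) (brG x2 x3) \<in> rels_mod_M"
  using IL_gens_subset unfolding IL_gens_def by blast

lemma t_brM: "t (brM a b) = brG (t a) (t b)"
  using t_hom by (simp add: hl_hom_def)

lemma ker_p_in_subspace:
  assumes "module.subspace scG V" and "\<And>a b. brG (t (alM a)) (t (alM b)) \<in> V" and "p u = 0"
  shows "u \<in> V"
proof -
  have "t -` V = UNIV"
  proof (rule alpha_perfect_subspace_eq_UNIV[OF perfM hom_leibniz_module[OF hlM]])
    show "module.subspace scM (t -` V)"
      by (rule module_hom.subspace_vimage[OF hl_hom_module_hom[OF t_hom] assms(1)])
    show "brM (alM a) (alM b) \<in> t -` V" for a b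
      using assms(2) by (simp add: t_brM)
  qed
  moreover obtain m where "u = t m" using assms(3) exact by blast
  ultimately show ?thesis by blast
qed

lemma delta_ker_section:
  assumes "p u = 0"
  shows "delta u (s q) \<in> rels_mod_M"
proof -
  have "brG x1 x2 \<in> {u. delta u (s q) \<in> rels_mod_M}" if "p x1 = 0" "p x2 = 0" for x1 x2
  proof -
    \<comment> \<open>Hom-Leibniz relation for \<open>x1, x2, s q\<close>: its other two terms have both entries in \<open>ker p\<close>.\<close>
    have "delta (brG x1 (s q)) (alG x2) \<in> rels_mod_M" "delta (alG x1) (brG x2 (s q)) \<in> rels_mod_M"
      using that by (simp_all add: delta_ker_ker)
    then have "(delta (brG x1 (s q)) (alG x2) + delta (alG x1) (brG x2 (s q)))
        - (- delta (brG x1 x2) (alG (s q)) + delta (brG x1 (s q)) (alG x2) + delta (alG x1) (brG x2 (s q)))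
        \<in> rels_mod_M"
      by (intro FS.subspace_diff[OF subspace_rels_mod_M] FS.subspace_add[OF subspace_rels_mod_M] IL_gens_mem)
    then show ?thesis by simp
  qed
  then show ?thesis
    using ker_p_in_subspace[OF subspace_delta_left[OF hom_leibniz_module[OF hlG] surj_alG
        subspace_rels_mod_M bilin_rels_subset] _ assms] by simp
qed

lemma delta_section_ker:
  assumes "p u = 0"
  shows "delta (s q) u \<in> rels_mod_M"
proof -
  have "brG x2 x3 \<in> {u. delta (s q) u \<in> rels_mod_M}" if "p x2 = 0" "p x3 = 0" for x2 x3
  proof -
    have "delta (brG (s q) x2) (alG x3) \<in> rels_mod_M" "delta (brG (s q) x3) (alG x2) \<in> rels_mod_M"
      using that by (simp_all add: delta_ker_ker)
    then have "(- delta (brG (s q) x2) (alG x3) + delta (brG (s q) x3) (alG x2) + delta (alG (s q)) (brG x2 x3))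
        + (delta (brG (s q) x2) (alG x3) - delta (brG (s q) x3) (alG x2)) \<in> rels_mod_M"
      by (intro FS.subspace_diff[OF subspace_rels_mod_M] FS.subspace_add[OF subspace_rels_mod_M] IL_gens_mem)
    then show ?thesis by simp
  qed
  then show ?thesis
    using ker_p_in_subspace[OF subspace_delta_right[OF hom_leibniz_module[OF hlG] surj_alG
        subspace_rels_mod_M bilin_rels_subset] _ assms] by simp
qed

lemma delta_minus_section:
  "delta a b - delta (s (p a)) (s (p b)) \<in> rels_mod_M"
proof -
  define u v where "u = a - s (p a)" and "v = b - s (p b)"
  have ker: "p u = 0" "p v = 0"
    unfolding u_def v_def by (simp_all add: module_hom.diff[OF hl_hom_module_hom[OF p_hom]] split)
  have bilin: "delta (u + s (p a)) (v + s (p b)) - delta u (v + s (p b)) - delta (s (p a)) (v + s (p b))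
      \<in> rels_mod_M"
    "delta u (v + s (p b)) - delta u v - delta u (s (p b)) \<in> rels_mod_M"
    "delta (s (p a)) (v + s (p b)) - delta (s (p a)) v - delta (s (p a)) (s (p b)) \<in> rels_mod_M"
    using bilin_rels_subset bilin_rels_memI[OF surj_alG] by blast+
  have "(delta (u + s (p a)) (v + s (p b)) - delta u (v + s (p b)) - delta (s (p a)) (v + s (p b)))
      + (delta u (v + s (p b)) - delta u v - delta u (s (p b)))
      + (delta (s (p a)) (v + s (p b)) - delta (s (p a)) v - delta (s (p a)) (s (p b)))
      + delta u v + delta u (s (p b)) + delta (s (p a)) v \<in> rels_mod_M"
    by (intro FS.subspace_add[OF subspace_rels_mod_M] bilin delta_ker_ker delta_ker_section
        delta_section_ker ker)
  then show ?thesis by (simp add: u_def v_def)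
qed

lemma free_minus_section:
  assumes "f \<in> free_sp alG"
  shows "f - push s (push p f) \<in> rels_mod_M"
proof -
  define F where "F f = f - push s (push p f)" for f :: "'g \<times> 'g \<Rightarrow> 'k"
  have "linear_on_fs F"
    unfolding linear_on_fs_def F_def
    by (simp add: finite_support_push FS.scale_right_diff_distrib)
  then have "F ` free_sp alG = FS.span (F ` {delta (alG x) (alG y) | x y. True})"
    unfolding free_sp_def by (rule linear_on_fs_image_span) auto
  also have "\<dots> \<subseteq> rels_mod_M"
    using delta_minus_section
    by (intro FS.span_minimal[OF _ subspace_rels_mod_M]) (auto simp: F_def simp del: p_alG)
  finally show ?thesis using assms by (auto simp: F_def)
qed

lemma M_span_subset_free_sp: "M_span \<subseteq> free_sp alG"
proof -
  have "t (alM m) = alG (t m)" for m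
    using t_hom by (simp add: hl_hom_def)
  then show ?thesis
    unfolding M_span_def M_gens_def free_sp_def by (intro FS.span_mono) auto
qed

lemma push_p_M_span: "push p ` M_span \<subseteq> uce_rels scQ brQ id"
proof -
  have "push p ` M_span = FS.span (push p ` M_gens)"
    unfolding M_span_def by (rule linear_on_fs_image_span[OF linear_on_fs_push]) (auto simp: M_gens_def)
  also have "\<dots> \<subseteq> uce_rels scQ brQ id"
    using delta_zero_left_uce_rels[of id]
    by (intro FS.span_minimal[OF _ subspace_uce_rels]) (auto simp: M_gens_def)
  finally show ?thesis .
qed

lemma push_t_free_sp: "push t ` free_sp alM = M_span"
proof -
  have "push t ` free_sp alM = FS.span (push t ` {delta (alM x) (alM y) | x y. True})"
    unfolding free_sp_def by (rule linear_on_fs_image_span[OF linear_on_fs_push]) auto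
  also have "push t ` {delta (alM x) (alM y) | x y. True} = M_gens"
    unfolding M_gens_def by force
  finally show ?thesis unfolding M_span_def .
qed

lemma ker_uce_map_p:
  "{c \<in> uce scG brG alG. uce_map scQ brQ id p c = uce_class scQ brQ id 0}
     = uce_class scG brG alG ` M_span"
proof (intro equalityI subsetI)
  fix c assume "c \<in> {c \<in> uce scG brG alG. uce_map scQ brQ id p c = uce_class scQ brQ id 0}"
  then obtain f where f: "f \<in> free_sp alG" "c = uce_class scG brG alG f"
    and ker: "uce_map scQ brQ id p c = uce_class scQ brQ id 0"
    unfolding uce_def by auto
  have "push p f \<in> uce_rels scQ brQ id"
    using ker f uce_map_uce_class[OF p_hom free_sp_finite_support] by (simp add: uce_class_eq_iff)
  then have "push s (push p f) \<in> rels_mod_M"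
    using push_uce_rels[OF s_hom] uce_rels_subset by blast
  then have "(f - push s (push p f)) + push s (push p f) \<in> rels_mod_M"
    by (intro FS.subspace_add[OF subspace_rels_mod_M] free_minus_section f)
  then obtain x y where "f = x + y" "x \<in> M_span" "y \<in> uce_rels scG brG alG"
    unfolding rels_mod_M_eq by auto
  then have "uce_class scG brG alG f = uce_class scG brG alG x"
    by (simp add: uce_class_eq_iff)
  then show "c \<in> uce_class scG brG alG ` M_span"
    using f \<open>x \<in> M_span\<close> by blast
next
  fix c assume "c \<in> uce_class scG brG alG ` M_span"
  then obtain f where f: "f \<in> M_span" "c = uce_class scG brG alG f" by blast
  then have fs: "f \<in> free_sp alG" using M_span_subset_free_sp by blast
  have "uce_map scQ brQ id p c = uce_class scQ brQ id (push p f)"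
    using f uce_map_uce_class[OF p_hom free_sp_finite_support[OF fs]] by simp
  also have "\<dots> = uce_class scQ brQ id 0"
    using push_p_M_span f by (simp add: uce_class_eq_iff image_subset_iff)
  finally show "c \<in> {c \<in> uce scG brG alG. uce_map scQ brQ id p c = uce_class scQ brQ id 0}"
    using f fs unfolding uce_def by blast
qed

lemma uce_map_t_image: "uce_map scG brG alG t ` uce scM brM alM = uce_class scG brG alG ` M_span"
proof -
  have "uce_map scG brG alG t ` uce scM brM alM = (\<lambda>f. uce_class scG brG alG (push t f)) ` free_sp alM"
    unfolding uce_def image_image
    using uce_map_uce_class[OF t_hom free_sp_finite_support] by (intro image_cong) simp_all
  also have "\<dots> = uce_class scG brG alG ` M_span"
    unfolding push_t_free_sp[symmetric] image_image ..
  finally show ?thesis .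
qed

end

theorem proposition5p1:
  fixes scM :: "'k::field \<Rightarrow> 'm::ab_group_add \<Rightarrow> 'm" and brM :: "'m \<Rightarrow> 'm \<Rightarrow> 'm" and alM :: "'m \<Rightarrow> 'm"
    and scG :: "'k \<Rightarrow> 'g::ab_group_add \<Rightarrow> 'g" and brG :: "'g \<Rightarrow> 'g \<Rightarrow> 'g" and alG :: "'g \<Rightarrow> 'g"
    and scQ :: "'k \<Rightarrow> 'q::ab_group_add \<Rightarrow> 'q" and brQ :: "'q \<Rightarrow> 'q \<Rightarrow> 'q"
    and t :: "'m \<Rightarrow> 'g" and p :: "'g \<Rightarrow> 'q" and s :: "'q \<Rightarrow> 'g"
  assumes hlM: "hom_leibniz scM brM alM"
    and hlG: "hom_leibniz scG brG alG"
    and hlQ: "hom_leibniz scQ brQ id"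
    and perfM: "alpha_perfect scM brM alM"
    and perfG: "alpha_perfect scG brG alG"
    and perfQ: "alpha_perfect scQ brQ id"
    and t_hom: "hl_hom scM brM alM scG brG alG t"
    and p_hom: "hl_hom scG brG alG scQ brQ id p"
    and t_inj: "inj t"
    and p_surj: "surj p"
    and exact: "range t = {g. p g = 0}"
    and s_hom: "hl_hom scQ brQ id scG brG alG s"
    and split: "\<And>q. p (s q) = q"
  shows "{c \<in> uce scG brG alG. uce_map scQ brQ id p c = uce_class scQ brQ id 0}
           = uce_class scG brG alG ` module.span fsmult {delta (t (alM m1)) (t (alM m2)) | m1 m2. True}
       \<and> uce_class scG brG alG ` module.span fsmult {delta (t (alM m1)) (t (alM m2)) | m1 m2. True}
           = uce_map scG brG alG t ` uce scM brM alM"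
proof -
  interpret split_hom_leibniz_extension scM brM alM scG brG alG scQ brQ t p s
    using hlM hlG hlQ perfM perfG t_hom p_hom exact s_hom split
    by unfold_locales
  show ?thesis
    using ker_uce_map_p uce_map_t_image unfolding M_span_def M_gens_def by simp
qed

end
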